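(* Let $v_0\ge 1$ be an integer and let $f=1+\sum_{v\ge v_0}p_vx^v\in K[[x]]$ with $p_{v_0}=1$. Define the coefficients $\mathfrak p_{uv}^w\in K$ ($u,v,w\in\mathbb N_0$) as follows. Put $g=\dfrac{f\,(f^{v_0}-1)}{f'}\in K[[x]]$. Let $G=\sum_{v\ge 0}g_v(x)y^v\in K[[x]][[y]]$ be the unique series with $g_0=x$ satisfying $$G_y(x,y)=g(x)f'(y)G_x(x,y)-\bigl(f(y)-1\bigr)G_y(x,y).$$ Set $\mathfrak p_{uv}^0=\delta_{0,u+v}$, let $\mathfrak p_{uv}^1$ be the coefficient of $x^uy^v$ in $G$, and for $w>1$ set recursively $\mathfrak p_{uv}^w=\sum_{u_1+u_2=u,\ v_1+v_2=v}\mathfrak p_{u_1v_1}^1\mathfrak p_{u_2v_2}^{w-1}$. Then for all $i,j,k\in\mathbb N_0$, $$\sum_{a+b=j}\sum_{h=0}^i\sum_{l=0}^k \mathfrak p_{ia}^h\mathfrak p_{kb}^l\mathfrak p_{hl}^1=\sum_{c+d=k}\sum_{h=0}^i\sum_{l=0}^j \mathfrak p_{ic}^h\mathfrak p_{jd}^l\mathfrak p_{hl}^1,$$ where the sums over $a+b=j$ and $c+d=k$ run over pairs of nonnegative integers.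
   Context: $K$ is an algebraically closed field of characteristic $0$. $K[[x]]$ and $K[[x]][[y]]=K[[x,y]]$ are formal power series rings; $f'$ is the formal derivative of $f$, and $G_x,G_y$ are the formal partial derivatives of $G$. Since $f'$ has order $v_0-1$ and $f(f^{v_0}-1)$ has order $v_0$, $g$ is a well-defined power series lying in $x+x^2K[[x]]$; comparing coefficients of $y^v$ in the displayed differential equation determines the $g_v$ recursively from $g_0=x$, so $G$ is well defined. *)

theory Defs
  imports "HOL-Computational_Algebra.Computational_Algebra"
begin

text \<open>Series in K[[x]][[y]] are represented as ''a fps fps: the outer variable is y,
  the inner variable is x. So (G $ v) $ u is the coefficient of x^u y^v.\<close>

definition fps_in_y :: "'a::comm_ring_1 fps \<Rightarrow> 'a fps fps" where
  "fps_in_y f = Abs_fps (\<lambda>v. fps_const (f $ v))"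

definition fps_deriv_x :: "'a::comm_ring_1 fps fps \<Rightarrow> 'a fps fps" where
  "fps_deriv_x G = Abs_fps (\<lambda>v. fps_deriv (G $ v))"

text \<open>g = f (f^v0 - 1) / f'  (exact division in K[[x]]).\<close>
definition g_series :: "nat \<Rightarrow> 'a::field fps \<Rightarrow> 'a fps" where
  "g_series v0 f = (f * (f ^ v0 - 1)) div fps_deriv f"

definition is_G :: "nat \<Rightarrow> 'a::field fps \<Rightarrow> 'a fps fps \<Rightarrow> bool" where
  "is_G v0 f G \<longleftrightarrow> G $ 0 = fps_X \<and>
     fps_deriv G = fps_const (g_series v0 f) * fps_in_y (fps_deriv f) * fps_deriv_x G
                   - (fps_in_y f - 1) * fps_deriv G"

text \<open>The coefficients p_{uv}^w: pfrak G w u v.\<close>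
fun pfrak :: "'a::comm_ring_1 fps fps \<Rightarrow> nat \<Rightarrow> nat \<Rightarrow> nat \<Rightarrow> 'a" where
  "pfrak G 0 u v = (if u + v = 0 then 1 else 0)"
| "pfrak G (Suc 0) u v = (G $ v) $ u"
| "pfrak G (Suc (Suc w)) u v =
     (\<Sum>u1\<le>u. \<Sum>v1\<le>v. pfrak G (Suc 0) u1 v1 * pfrak G (Suc w) (u - u1) (v - v1))"

end

theory Submission
  imports Defs
begin

text \<open>Write \<open>F = f^(-v0)\<close> and \<open>\<gamma> = g / v0\<close>, so that \<open>\<gamma> F' = F - 1\<close>. Let \<open>C(x,t)\<close> be the
  flow of the vector field \<open>\<gamma>(x) \<partial>\<^sub>x + (1 + t) \<partial>\<^sub>t\<close>, i.e. the solution of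
  \<open>\<gamma> C\<^sub>x + (1 + t) C\<^sub>t = 0\<close> with \<open>C(x,0) = x\<close>. The defining equation of \<open>G\<close> has unique
  solutions and is satisfied by \<open>C(x, F(y) - 1)\<close>, so \<open>G(x,y) = C(x, F(y) - 1)\<close>, and
  \<open>u \<mapsto> u(G(x,y))\<close> is a ring homomorphism sending \<open>x^h\<close> to \<open>G^h\<close>. Hence the left-hand
  side is the coefficient of \<open>x^i z^k y^j\<close> in \<open>G(G(x,y), G(z,y))\<close>. The group law
  \<open>C(C(x,s),t) = C(x, s + t + s t)\<close> of the flow and the identity
  \<open>F(y) (F(G(z,y)) - 1) = F(z) - 1\<close> turn this series into \<open>C(x, (F(y) - 1) + (F(z) - 1))\<close>,
  which is symmetric in \<open>y\<close> and \<open>z\<close>.\<close>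

section \<open>Power series in two variables\<close>

lemma fps_X_power_dvd_iff: "fps_X ^ n dvd (p :: 'a::idom fps) \<longleftrightarrow> (\<forall>t<n. p $ t = 0)"
proof
  assume "fps_X ^ n dvd p"
  then obtain q where "p = fps_X ^ n * q" by blast
  then show "\<forall>t<n. p $ t = 0" by (simp add: fps_X_power_mult_nth)
next
  assume "\<forall>t<n. p $ t = 0"
  then have "p = fps_shift n p * fps_X ^ n"
    by (cases "p = 0") (auto intro!: fps_shift_times_fps_X_power[symmetric] subdegree_geI)
  then show "fps_X ^ n dvd p" by (metis dvd_triv_right)
qed

lemma fps_of_nat_Suc_mult_eq_0_iff:
  "of_nat (Suc n) * (a :: 'a::{idom, semiring_char_0} fps) = 0 \<longleftrightarrow> a = 0"
  by (simp flip: fps_of_nat del: of_nat_Suc)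

lemma fps_const_sum: "fps_const (sum f S) = (\<Sum>i\<in>S. fps_const (f i))"
  by (induction S rule: infinite_finite_induct) (auto simp flip: fps_const_add)

lemma fps_in_y_nth [simp]: "fps_in_y a $ n = fps_const (a $ n)"
  by (simp add: fps_in_y_def)

lemma fps_in_y_1 [simp]: "fps_in_y 1 = 1"
  by (simp add: fps_eq_iff)

lemma fps_in_y_of_nat [simp]: "fps_in_y (of_nat n) = of_nat n"
  by (simp add: fps_eq_iff flip: fps_of_nat)

lemma fps_in_y_diff: "fps_in_y (a - b) = fps_in_y a - fps_in_y b"
  by (simp add: fps_eq_iff)

lemma fps_in_y_uminus: "fps_in_y (- a) = - fps_in_y a"
  by (simp add: fps_eq_iff)

lemma fps_in_y_mult: "fps_in_y (a * b) = fps_in_y a * fps_in_y b"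
  by (simp add: fps_eq_iff fps_mult_nth fps_const_sum)

lemma fps_in_y_power: "fps_in_y (a ^ n) = fps_in_y a ^ n"
  by (induction n) (simp_all add: fps_in_y_mult)

lemma fps_deriv_fps_in_y: "fps_deriv (fps_in_y a) = fps_in_y (fps_deriv a)"
  by (simp add: fps_eq_iff flip: fps_of_nat)

lemma fps_deriv_x_nth [simp]: "fps_deriv_x Z $ n = fps_deriv (Z $ n)"
  by (simp add: fps_deriv_x_def)

lemma fps_deriv_x_add: "fps_deriv_x (A + B) = fps_deriv_x A + fps_deriv_x B"
  by (simp add: fps_eq_iff)

lemma fps_deriv_x_diff: "fps_deriv_x (A - B) = fps_deriv_x A - fps_deriv_x B"
  by (simp add: fps_eq_iff)

lemma fps_deriv_x_mult: "fps_deriv_x (A * B) = fps_deriv_x A * B + A * fps_deriv_x B"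
  by (simp add: fps_eq_iff fps_mult_nth fps_deriv_sum sum.distrib)

lemma fps_deriv_x_compose_fps_in_y:
  "fps_deriv_x (A oo fps_in_y b) = fps_deriv_x A oo fps_in_y b"
  by (simp add: fps_eq_iff fps_compose_nth fps_deriv_sum flip: fps_in_y_power)

definition fps_coeff_x :: "nat \<Rightarrow> 'a::comm_ring_1 fps fps \<Rightarrow> 'a fps" where
  "fps_coeff_x i Z = Abs_fps (\<lambda>v. Z $ v $ i)"

lemma fps_coeff_x_nth [simp]: "fps_coeff_x i Z $ v = Z $ v $ i"
  by (simp add: fps_coeff_x_def)

lemma fps_coeff_x_fps_in_y_mult: "fps_coeff_x i (fps_in_y p * Z) = p * fps_coeff_x i Z"
  by (rule fps_ext) (simp add: fps_mult_nth[of "fps_in_y p"] fps_mult_nth[of p] fps_sum_nth)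

lemma fps_coeff_x_fps_const: "fps_coeff_x i (fps_const c) = fps_const (c $ i)"
  by (rule fps_ext) simp

lemma sum_nth_nth_mult_eq_fps_coeff_x_mult:
  "(\<Sum>a\<le>j. X $ a $ i * Y $ (j - a) $ k) = (fps_coeff_x i X * fps_coeff_x k Y) $ j"
  by (simp add: fps_mult_nth atLeast0AtMost)

lemma fps_in_y_deriv_eq_imp_eq_0:
  fixes Z :: "'a::field_char_0 fps fps"
  assumes "f $ 0 \<noteq> 0"
    and "fps_in_y f * fps_deriv Z = H * fps_deriv_x Z"
    and "Z $ 0 = 0"
  shows "Z = 0"
proof -
  have "\<forall>m\<le>n. Z $ m = 0" for n
  proof (induction n)
    case (Suc n)
    have vanish: "Z $ Suc (n - i) = 0" if "0 < i" "i \<le> n" for i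
      using Suc.IH that by (simp add: Suc_le_eq)
    have "(fps_in_y f * fps_deriv Z) $ n
        = (\<Sum>i\<le>n. fps_const (f $ i) * (of_nat (n - i + 1) * Z $ (n - i + 1)))"
      by (simp add: fps_mult_nth atLeast0AtMost)
    also have "\<dots> = fps_const (f $ 0) * (of_nat (Suc n) * Z $ Suc n)"
      by (subst sum.remove[of _ 0]) (auto intro!: sum.neutral simp: vanish simp del: of_nat_Suc)
    finally have "(fps_in_y f * fps_deriv Z) $ n = fps_const (f $ 0) * (of_nat (Suc n) * Z $ Suc n)"
      .
    moreover have "(H * fps_deriv_x Z) $ n = 0"
      using Suc.IH by (simp add: fps_mult_nth)
    ultimately have "of_nat (Suc n) * Z $ Suc n = 0"
      using assms(1,2) by simp
    then have "Z $ Suc n = 0"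
      by (simp only: fps_of_nat_Suc_mult_eq_0_iff)
    then show ?case
      using Suc.IH by (auto simp: le_Suc_eq)
  qed (simp add: assms(3))
  then show ?thesis by (metis fps_ext fps_zero_nth order_refl)
qed

lemma fps_X_power_dvd_nth_mult:
  fixes A B :: "'a::idom fps fps"
  assumes "\<And>v. fps_X ^ a dvd A $ v" and "\<And>v. fps_X ^ b dvd B $ v"
  shows "fps_X ^ (a + b) dvd (A * B) $ v"
  using assms by (auto simp: fps_mult_nth power_add intro!: dvd_sum mult_dvd_mono)

lemma fps_X_power_dvd_nth_power:
  fixes A :: "'a::idom fps fps"
  assumes "\<And>v. fps_X dvd A $ v"
  shows "fps_X ^ h dvd (A ^ h) $ v"
proof (induction h arbitrary: v)
  case (Suc h)
  then show ?case
    using fps_X_power_dvd_nth_mult[of 1 A h "A ^ h"] assms by simp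
qed simp

lemma fps_hom_nth_nth_truncate:
  fixes \<Phi> :: "'a::idom fps \<Rightarrow> 'a fps fps"
  assumes add: "\<And>u w. \<Phi> (u + w) = \<Phi> u + \<Phi> w"
    and mult: "\<And>u w. \<Phi> (u * w) = \<Phi> u * \<Phi> w"
    and const: "\<And>c. \<Phi> (fps_const c) = fps_const (fps_const c)"
    and X: "\<And>v. \<Phi> fps_X $ v $ 0 = 0"
  shows "\<Phi> u $ a $ i = (\<Sum>h\<le>i. u $ h * (\<Phi> fps_X ^ h) $ a $ i)"
proof -
  have power: "\<Phi> (w ^ n) = \<Phi> w ^ n" for w n
    using const[of 1] by (induction n) (simp_all add: mult)
  have sum: "\<Phi> (\<Sum>h\<in>H. p h) = (\<Sum>h\<in>H. \<Phi> (p h))" for p and H :: "nat set"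
    using const[of 0] by (induction H rule: infinite_finite_induct) (simp_all add: add)
  define p where "p = (\<Sum>h\<le>i. fps_const (u $ h) * fps_X ^ h)"
  have "p $ n = (\<Sum>h\<le>i. if n = h then u $ n else 0)" for n
    unfolding p_def fps_sum_nth by (rule sum.cong) auto
  then have "u = p + fps_X ^ Suc i * fps_shift (Suc i) u"
    by (intro fps_ext) (simp add: fps_X_power_mult_nth del: power_Suc)
  then have "\<Phi> u = \<Phi> (p + fps_X ^ Suc i * fps_shift (Suc i) u)"
    by (rule arg_cong)
  also have "\<dots> = \<Phi> p + \<Phi> fps_X ^ Suc i * \<Phi> (fps_shift (Suc i) u)"
    by (simp only: add mult power)
  finally have "\<Phi> u = \<Phi> p + \<Phi> fps_X ^ Suc i * \<Phi> (fps_shift (Suc i) u)" .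
  moreover have "\<Phi> p = (\<Sum>h\<le>i. fps_const (fps_const (u $ h)) * \<Phi> fps_X ^ h)"
    by (simp only: p_def sum mult const power)
  moreover have "(\<Phi> fps_X ^ Suc i * \<Phi> (fps_shift (Suc i) u)) $ a $ i = 0"
  proof -
    have "fps_X ^ (Suc i + 0) dvd (\<Phi> fps_X ^ Suc i * \<Phi> (fps_shift (Suc i) u)) $ a"
    proof (rule fps_X_power_dvd_nth_mult)
      show "fps_X ^ Suc i dvd (\<Phi> fps_X ^ Suc i) $ v" for v
        using X by (intro fps_X_power_dvd_nth_power) (simp add: fps_X_power_dvd_iff[of 1, simplified])
    qed simp
    then show ?thesis
      unfolding fps_X_power_dvd_iff by (simp del: power_Suc)
  qed
  ultimately show ?thesis
    by (simp add: fps_sum_nth del: power_Suc)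
qed

lemma pfrak_eq_nth_nth_power: "pfrak G w u v = (G ^ w) $ v $ u"
proof (induction G w u v rule: pfrak.induct)
  case (3 G w u v)
  have "pfrak G (Suc (Suc w)) u v
      = (\<Sum>u1\<le>u. \<Sum>v1\<le>v. G $ v1 $ u1 * (G ^ Suc w) $ (v - v1) $ (u - u1))"
    using 3 by simp
  also have "\<dots> = (G * G ^ Suc w) $ v $ u"
    by (subst sum.swap) (simp add: fps_mult_nth fps_sum_nth atLeast0AtMost)
  finally show ?case by simp
qed simp_all

section \<open>The flow of \<open>\<gamma>(x) \<partial>\<^sub>x + (1 + t) \<partial>\<^sub>t\<close>\<close>

definition transport_op :: "'a::comm_ring_1 fps \<Rightarrow> 'a fps fps \<Rightarrow> 'a fps fps" where
  "transport_op \<gamma> Z = fps_const \<gamma> * fps_deriv_x Z + (1 + fps_X) * fps_deriv Z"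

lemma transport_op_nth:
  "transport_op \<gamma> Z $ n = \<gamma> * fps_deriv (Z $ n) + of_nat (Suc n) * Z $ Suc n + of_nat n * Z $ n"
  by (cases n) (simp_all add: transport_op_def algebra_simps flip: fps_of_nat del: of_nat_Suc)

lemma transport_op_diff:
  "transport_op \<gamma> (A - B) = transport_op \<gamma> A - transport_op \<gamma> B"
  by (simp add: transport_op_def fps_deriv_x_diff algebra_simps)

lemma transport_op_mult:
  "transport_op \<gamma> (A * B) = transport_op \<gamma> A * B + A * transport_op \<gamma> B"
  by (simp add: transport_op_def fps_deriv_x_mult algebra_simps)

lemma transport_op_add:
  "transport_op \<gamma> (A + B) = transport_op \<gamma> A + transport_op \<gamma> B"
  by (simp add: transport_op_def fps_deriv_x_add algebra_simps)

lemma transport_op_fps_const [simp]: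
  "transport_op \<gamma> (fps_const h) = fps_const (\<gamma> * fps_deriv h)"
  by (simp add: transport_op_def fps_eq_iff)

lemma transport_op_one_plus_X [simp]: "transport_op \<gamma> (1 + fps_X) = 1 + fps_X"
  by (simp add: transport_op_def fps_eq_iff)

lemma transport_op_1 [simp]: "transport_op \<gamma> 1 = 0"
  by (simp add: transport_op_def fps_eq_iff)

lemma transport_op_one_plus_X_power:
  "transport_op \<gamma> ((1 + fps_X) ^ R) = of_nat R * (1 + fps_X) ^ R"
proof (induction R)
  case (Suc R)
  then show ?case
    by (simp only: power_Suc transport_op_mult transport_op_one_plus_X) (simp add: algebra_simps)
qed simp

lemma transport_op_eigen_unique:
  fixes A B :: "'a::field_char_0 fps fps"
  assumes "transport_op \<gamma> A = fps_const (fps_const c) * A"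
    and "transport_op \<gamma> B = fps_const (fps_const c) * B"
    and "A $ 0 = B $ 0"
  shows "A = B"
proof -
  define W where "W = A - B"
  have eq: "transport_op \<gamma> W = fps_const (fps_const c) * W"
    using assms(1,2) by (simp add: W_def transport_op_diff algebra_simps)
  have "W $ n = 0" for n
  proof (induction n)
    case 0
    show ?case using assms(3) by (simp add: W_def)
  next
    case (Suc n)
    have "transport_op \<gamma> W $ n = fps_const c * W $ n" by (simp add: eq)
    with Suc.IH have "of_nat (Suc n) * W $ Suc n = 0"
      by (simp add: transport_op_nth del: of_nat_Suc)
    then show ?case by (simp only: fps_of_nat_Suc_mult_eq_0_iff)
  qed
  then show ?thesis by (simp add: W_def fps_eq_iff)
qed

text \<open>\<open>flow \<gamma> u\<close> is \<open>u(C(x,t))\<close>, where \<open>C = flow \<gamma> fps_X\<close> is the flow of the vector field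
  \<open>\<gamma>(x) \<partial>\<^sub>x + (1 + t) \<partial>\<^sub>t\<close>, the outer variable being the time \<open>t\<close>.\<close>

fun flow_coeff :: "'a::field_char_0 fps \<Rightarrow> 'a fps \<Rightarrow> nat \<Rightarrow> 'a fps" where
  "flow_coeff \<gamma> u 0 = u"
| "flow_coeff \<gamma> u (Suc n) = - fps_const (1 / of_nat (Suc n)) *
     (\<gamma> * fps_deriv (flow_coeff \<gamma> u n) + of_nat n * flow_coeff \<gamma> u n)"

definition flow :: "'a::field_char_0 fps \<Rightarrow> 'a fps \<Rightarrow> 'a fps fps" where
  "flow \<gamma> u = Abs_fps (flow_coeff \<gamma> u)"

lemma flow_nth: "flow \<gamma> u $ n = flow_coeff \<gamma> u n"
  by (simp add: flow_def)

lemma flow_nth_0 [simp]: "flow \<gamma> u $ 0 = u"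
  by (simp add: flow_def)

lemma transport_op_flow [simp]: "transport_op \<gamma> (flow \<gamma> u) = 0"
proof (rule fps_ext)
  fix n
  define s where "s = \<gamma> * fps_deriv (flow \<gamma> u $ n) + of_nat n * flow \<gamma> u $ n"
  have "of_nat (Suc n) * fps_const (- (1 / of_nat (Suc n))) = (- 1 :: 'a fps)"
    by (simp flip: fps_of_nat fps_const_mult del: of_nat_Suc)
  then have "of_nat (Suc n) * flow \<gamma> u $ Suc n = - s"
    by (simp add: flow_nth s_def mult.assoc [symmetric] del: of_nat_Suc)
  then show "transport_op \<gamma> (flow \<gamma> u) $ n = 0 $ n"
    by (simp add: transport_op_nth s_def del: of_nat_Suc)
qed

lemma flow_unique: "transport_op \<gamma> Z = 0 \<Longrightarrow> flow \<gamma> (Z $ 0) = Z"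
  by (rule transport_op_eigen_unique[where c = 0]) simp_all

lemma flow_add: "flow \<gamma> (u + w) = flow \<gamma> u + flow \<gamma> w"
  using flow_unique[of \<gamma> "flow \<gamma> u + flow \<gamma> w"] by (simp add: transport_op_add)

lemma flow_mult: "flow \<gamma> (u * w) = flow \<gamma> u * flow \<gamma> w"
  using flow_unique[of \<gamma> "flow \<gamma> u * flow \<gamma> w"] by (simp add: transport_op_mult)

lemma flow_const: "flow \<gamma> (fps_const c) = fps_const (fps_const c)"
  using flow_unique[of \<gamma> "fps_const (fps_const c)"] by simp

lemma flow_nth_0_eq_0:
  assumes "\<gamma> $ 0 = 0" and "u $ 0 = 0"
  shows "flow \<gamma> u $ n $ 0 = 0"
  using assms by (induction n) (simp_all add: flow_nth flip: fps_of_nat)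

text \<open>The coefficient of \<open>s^R\<close> in \<open>Z(x, t + s)\<close>.\<close>

definition fps_taylor_coeff :: "nat \<Rightarrow> 'a::comm_ring_1 fps fps \<Rightarrow> 'a fps fps" where
  "fps_taylor_coeff R Z = Abs_fps (\<lambda>m. of_nat (m + R choose m) * Z $ (m + R))"

text \<open>Differentiating \<open>R\<close> times in \<open>t\<close> commutes with \<open>\<gamma> \<partial>\<^sub>x\<close>, while
  \<open>\<partial>\<^sub>t\<^sup>R ((1 + t) \<partial>\<^sub>t Z) = (1 + t) \<partial>\<^sub>t (\<partial>\<^sub>t\<^sup>R Z) + R \<partial>\<^sub>t\<^sup>R Z\<close>.\<close>

lemma transport_op_fps_taylor_coeff:
  assumes "transport_op \<gamma> Z = 0"
  shows "transport_op \<gamma> (fps_taylor_coeff R Z) = - of_nat R * fps_taylor_coeff R Z"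
proof (rule fps_ext)
  fix m
  define N where "N = m + R"
  define b :: "'a fps" where "b = of_nat (m + R choose m)"
  define b' :: "'a fps" where "b' = of_nat (Suc m + R choose Suc m)"
  have Z: "\<gamma> * fps_deriv (Z $ N) + of_nat (Suc N) * Z $ Suc N + of_nat N * Z $ N = 0"
    using arg_cong[OF assms, of "\<lambda>Z. Z $ N"] by (simp add: transport_op_nth del: of_nat_Suc)
  have "Suc m * (Suc m + R choose Suc m) = Suc N * (m + R choose m)"
    using Suc_times_binomial_eq[of "m + R" m] by (simp add: N_def)
  then have binom: "of_nat (Suc m) * b' = of_nat (Suc N) * b"
    unfolding b_def b'_def by (metis of_nat_mult)
  have T: "fps_taylor_coeff R Z $ m = b * Z $ N" "fps_taylor_coeff R Z $ Suc m = b' * Z $ Suc N"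
    by (simp_all add: fps_taylor_coeff_def b_def b'_def N_def)
  have deriv: "fps_deriv (b * Z $ N) = b * fps_deriv (Z $ N)"
    by (simp add: b_def flip: fps_of_nat)
  have shift: "of_nat (Suc m) * (b' * Z $ Suc N) = b * (of_nat (Suc N) * Z $ Suc N)"
    by (simp only: mult.assoc [symmetric] binom) (simp only: ac_simps)
  have N: "(of_nat N :: 'a fps) = of_nat m + of_nat R"
    by (simp add: N_def)
  have "transport_op \<gamma> (fps_taylor_coeff R Z) $ m
      = \<gamma> * (b * fps_deriv (Z $ N)) + b * (of_nat (Suc N) * Z $ Suc N) + of_nat m * (b * Z $ N)"
    by (simp only: transport_op_nth T deriv shift)
  also have "\<dots> = b * (\<gamma> * fps_deriv (Z $ N) + of_nat (Suc N) * Z $ Suc N + of_nat N * Z $ N)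
        - of_nat R * (b * Z $ N)"
    unfolding N by (simp add: algebra_simps)
  also have "\<dots> = - of_nat R * (b * Z $ N)"
    using Z by simp
  also have "\<dots> = (- of_nat R * fps_taylor_coeff R Z) $ m"
    by (simp add: T flip: fps_of_nat)
  finally show "transport_op \<gamma> (fps_taylor_coeff R Z) $ m = (- of_nat R * fps_taylor_coeff R Z) $ m"
    .
qed

text \<open>For \<open>Z = C\<close> this is the coefficient of \<open>s^R\<close> in the group law
  \<open>C(C(x,t),s) = C(x, t + s + t s)\<close> of the flow.\<close>

lemma flow_nth_eq_fps_taylor_coeff:
  assumes "transport_op \<gamma> Z = 0"
  shows "flow \<gamma> (Z $ R) = (1 + fps_X) ^ R * fps_taylor_coeff R Z"
proof -
  have "transport_op \<gamma> ((1 + fps_X) ^ R * fps_taylor_coeff R Z) = 0"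
    by (simp only: transport_op_mult transport_op_one_plus_X_power
        transport_op_fps_taylor_coeff[OF assms]) (simp add: algebra_simps)
  from flow_unique[OF this] show ?thesis
    by (simp add: fps_taylor_coeff_def fps_power_zeroth)
qed

lemma flow_eigenvector:
  assumes "\<gamma> * fps_deriv h = h"
  shows "flow \<gamma> h * (1 + fps_X) = fps_const h"
  by (rule transport_op_eigen_unique[where c = 1 and \<gamma> = \<gamma>])
     (simp_all add: transport_op_mult assms)

section \<open>The series \<open>G\<close>\<close>

locale normalized_series =
  fixes v0 :: nat and f :: "'a::field_char_0 fps"
  assumes v0_pos: "0 < v0"
    and f_nth_0: "f $ 0 = 1"
    and f_nth_gap: "\<And>n. 0 < n \<Longrightarrow> n < v0 \<Longrightarrow> f $ n = 0"
    and f_nth_v0: "f $ v0 = 1"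
begin

definition F :: "'a fps" where "F = inverse (f ^ v0)"

definition \<gamma> :: "'a fps" where "\<gamma> = fps_const (1 / of_nat v0) * g_series v0 f"

lemma subdegree_deriv_f: "subdegree (fps_deriv f) = v0 - 1"
  using v0_pos f_nth_v0 f_nth_gap by (intro subdegreeI) auto

lemma deriv_f_dvd_fps_X_power: "fps_deriv f dvd fps_X ^ v0"
proof -
  have "fps_deriv f dvd fps_X ^ (v0 - 1)"
    using subdegree_deriv_f v0_pos f_nth_v0
    by (subst fps_dvd_iff) (auto simp: fps_X_power_subdegree fps_eq_iff intro!: exI[of _ "v0 - 1"])
  also have "fps_X ^ (v0 - 1) dvd (fps_X ^ v0 :: 'a fps)"
    by (simp add: le_imp_power_dvd)
  finally show ?thesis .
qed

lemma fps_X_power_dvd_f_power_minus_1: "fps_X ^ v0 dvd f ^ v0 - 1"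
proof -
  have "fps_X ^ v0 dvd f - 1"
    using f_nth_0 f_nth_gap by (auto simp: fps_X_power_dvd_iff less_Suc_eq_0_disj)
  also have "f - 1 dvd f ^ v0 - 1"
    by (metis power_diff_1_eq dvd_triv_left)
  finally show ?thesis .
qed

lemma g_series_mult_deriv_f: "g_series v0 f * fps_deriv f = f * (f ^ v0 - 1)"
proof -
  have "fps_deriv f dvd f ^ v0 - 1"
    using deriv_f_dvd_fps_X_power fps_X_power_dvd_f_power_minus_1 by (rule dvd_trans)
  then have "fps_deriv f dvd f * (f ^ v0 - 1)"
    by (rule dvd_mult)
  then show ?thesis by (simp add: g_series_def)
qed

lemma g_series_nth_0: "g_series v0 f $ 0 = 0"
proof -
  have "(g_series v0 f * fps_deriv f) $ (v0 - 1) = g_series v0 f $ 0 * of_nat v0"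
    using fps_mult_nth_conv_upto_subdegree_right[of "g_series v0 f" "fps_deriv f" "v0 - 1"]
      subdegree_deriv_f v0_pos f_nth_v0 by simp
  moreover have "fps_X ^ v0 dvd f * (f ^ v0 - 1)"
    using fps_X_power_dvd_f_power_minus_1 by (rule dvd_mult)
  then have "(f * (f ^ v0 - 1)) $ (v0 - 1) = 0"
    using v0_pos unfolding fps_X_power_dvd_iff by simp
  ultimately show ?thesis
    using g_series_mult_deriv_f v0_pos by simp
qed

lemma of_nat_v0_mult_gamma: "of_nat v0 * \<gamma> = g_series v0 f"
  using v0_pos by (simp add: \<gamma>_def flip: fps_of_nat mult.assoc fps_const_mult)

lemma gamma_nth_0: "\<gamma> $ 0 = 0"
  by (simp add: \<gamma>_def g_series_nth_0)

lemma f_nonzero: "f \<noteq> 0"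
  using f_nth_0 by auto

lemma F_mult_f_power: "F * f ^ v0 = 1"
  unfolding F_def by (rule inverse_mult_eq_1) (simp add: fps_power_zeroth f_nth_0)

lemma F_nth_0: "F $ 0 = 1"
  by (simp add: F_def fps_power_zeroth f_nth_0)

lemma F_minus_1_power_nth_eq_0: "l < R \<Longrightarrow> (F - 1) ^ R $ l = 0"
proof -
  assume "l < R"
  have "fps_X dvd F - 1"
    using fps_X_power_dvd_iff[of 1 "F - 1"] F_nth_0 by simp
  then have "fps_X ^ R dvd (F - 1) ^ R"
    by (rule dvd_power_same)
  with \<open>l < R\<close> show ?thesis
    unfolding fps_X_power_dvd_iff by blast
qed

lemma f_mult_deriv_F: "f * fps_deriv F = - (of_nat v0 * F * fps_deriv f)"
proof -
  have pow: "f ^ v0 = f * f ^ (v0 - 1)"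
    using v0_pos by (cases v0) simp_all
  have "fps_deriv F * f ^ v0 + F * (of_nat v0 * fps_deriv f * f ^ (v0 - 1)) = fps_deriv (F * f ^ v0)"
    by (simp add: fps_deriv_power')
  then have "(f * fps_deriv F + of_nat v0 * F * fps_deriv f) * f ^ (v0 - 1) = fps_deriv (F * f ^ v0)"
    by (simp add: pow algebra_simps)
  also have "\<dots> = 0"
    by (simp add: F_mult_f_power)
  finally show ?thesis
    using f_nonzero by (simp add: eq_neg_iff_add_eq_0)
qed

lemma gamma_mult_deriv_F: "\<gamma> * fps_deriv F = F - 1"
proof -
  have "f * (of_nat v0 * \<gamma> * fps_deriv F) = g_series v0 f * (f * fps_deriv F)"
    by (simp add: of_nat_v0_mult_gamma ac_simps)
  also have "\<dots> = - (of_nat v0 * F * (g_series v0 f * fps_deriv f))"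
    by (simp add: f_mult_deriv_F algebra_simps)
  also have "\<dots> = - (of_nat v0 * f * (F * (f ^ v0 - 1)))"
    by (simp only: g_series_mult_deriv_f) (simp add: algebra_simps)
  also have "F * (f ^ v0 - 1) = 1 - F"
    by (simp add: right_diff_distrib F_mult_f_power)
  also have "- (of_nat v0 * f * (1 - F)) = f * (of_nat v0 * (F - 1))"
    by (simp add: algebra_simps)
  finally have "of_nat v0 * (\<gamma> * fps_deriv F) = of_nat v0 * (F - 1)"
    using f_nonzero by (simp add: mult.assoc)
  then show ?thesis
    using v0_pos by (simp flip: fps_of_nat)
qed

definition B :: "'a fps fps" where "B = fps_in_y (F - 1)"

lemma B_nth_0: "B $ 0 = 0"
  by (simp add: B_def F_nth_0)

lemma deriv_B: "fps_deriv B = fps_in_y (fps_deriv F)"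
  by (simp add: B_def fps_deriv_fps_in_y)

lemma one_plus_B: "1 + B = fps_in_y F"
  by (simp add: B_def fps_in_y_diff)

lemma B_power: "B ^ R = fps_in_y ((F - 1) ^ R)"
  by (simp add: B_def fps_in_y_power)

text \<open>\<open>Phi u = (flow \<gamma> u)(x, F(y) - 1)\<close>, which is \<open>u(G(x,y))\<close> by \<open>is_G_imp_eq_Phi_X\<close>.\<close>

definition Phi :: "'a fps \<Rightarrow> 'a fps fps" where "Phi u = flow \<gamma> u oo B"

lemma Phi_add: "Phi (u + w) = Phi u + Phi w"
  by (simp add: Phi_def flow_add fps_compose_add_distrib)

lemma Phi_mult: "Phi (u * w) = Phi u * Phi w"
  by (simp add: Phi_def flow_mult fps_compose_mult_distrib[OF B_nth_0])

lemma Phi_const: "Phi (fps_const c) = fps_const (fps_const c)"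
  by (simp add: Phi_def flow_const)

lemma Phi_power: "Phi (u ^ n) = Phi u ^ n"
  using Phi_const[of 1] by (induction n) (simp_all add: Phi_mult)

lemma fps_in_y_f_mult_deriv_Phi:
  "fps_in_y f * fps_deriv (Phi u) = fps_const (g_series v0 f) * fps_in_y (fps_deriv f) * fps_deriv_x (Phi u)"
proof -
  define A where "A = flow \<gamma> u"
  define A' where "A' = fps_deriv A oo B"
  have "fps_const \<gamma> * (fps_deriv_x A oo B) + fps_in_y F * A' = transport_op \<gamma> A oo B"
    by (simp only: transport_op_def A'_def fps_compose_add_distrib fps_compose_mult_distrib[OF B_nth_0]
        fps_const_compose fps_compose_1 fps_X_fps_compose_startby0[OF B_nth_0] one_plus_B)
  also have "\<dots> = 0"
    by (simp add: A_def)
  finally have transported: "fps_const \<gamma> * (fps_deriv_x A oo B) = - (fps_in_y F * A')"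
    by (simp add: eq_neg_iff_add_eq_0)
  have "fps_in_y f * fps_deriv (Phi u) = fps_in_y f * (A' * fps_deriv B)"
    by (simp only: Phi_def A_def A'_def fps_compose_deriv[OF B_nth_0])
  also have "\<dots> = fps_in_y (f * fps_deriv F) * A'"
    by (simp add: deriv_B fps_in_y_mult mult.commute)
  also have "\<dots> = fps_in_y (fps_deriv f) * of_nat v0 * - (fps_in_y F * A')"
    by (simp add: f_mult_deriv_F fps_in_y_mult fps_in_y_uminus algebra_simps)
  also have "\<dots> = fps_in_y (fps_deriv f) * of_nat v0 * (fps_const \<gamma> * (fps_deriv_x A oo B))"
    by (simp only: transported)
  also have "\<dots> = fps_const (g_series v0 f) * fps_in_y (fps_deriv f) * fps_deriv_x (Phi u)"
  proof -
    have dx: "fps_deriv_x (Phi u) = fps_deriv_x A oo B"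
      by (simp add: Phi_def A_def B_def fps_deriv_x_compose_fps_in_y)
    have g: "fps_const (g_series v0 f) = of_nat v0 * fps_const \<gamma>"
      by (simp only: of_nat_v0_mult_gamma [symmetric] fps_const_mult [symmetric] fps_of_nat)
    show ?thesis
      unfolding dx g by (simp only: ac_simps)
  qed
  finally show ?thesis .
qed

lemma is_G_imp_eq_Phi_X:
  assumes "is_G v0 f G"
  shows "G = Phi fps_X"
proof -
  define H where "H = fps_const (g_series v0 f) * fps_in_y (fps_deriv f)"
  have G0: "G $ 0 = fps_X"
    and Gy: "fps_deriv G = H * fps_deriv_x G - (fps_in_y f - 1) * fps_deriv G"
    using assms unfolding is_G_def H_def by blast+
  have "fps_in_y f * fps_deriv G = fps_deriv G + (fps_in_y f - 1) * fps_deriv G"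
    by (simp add: algebra_simps)
  also have "\<dots> = H * fps_deriv_x G"
    by (subst (1) Gy) simp
  finally have "fps_in_y f * fps_deriv G = H * fps_deriv_x G" .
  then have eq: "fps_in_y f * fps_deriv (G - Phi fps_X) = H * fps_deriv_x (G - Phi fps_X)"
    using fps_in_y_f_mult_deriv_Phi[of fps_X] by (simp add: H_def fps_deriv_x_diff algebra_simps)
  have init: "(G - Phi fps_X) $ 0 = 0"
    by (simp add: G0 Phi_def)
  have "G - Phi fps_X = 0"
    by (rule fps_in_y_deriv_eq_imp_eq_0[OF _ eq init]) (simp add: f_nth_0)
  then show ?thesis by simp
qed

section \<open>The triple sum\<close>

lemma Phi_X_nth_nth_0: "Phi fps_X $ v $ 0 = 0"
  by (simp add: Phi_def fps_compose_nth fps_sum_nth B_power flow_nth_0_eq_0 gamma_nth_0)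

lemma Phi_nth_nth: "Phi u $ a $ i = (\<Sum>h\<le>i. u $ h * (Phi fps_X ^ h) $ a $ i)"
  by (rule fps_hom_nth_nth_truncate[OF Phi_add Phi_mult Phi_const Phi_X_nth_nth_0])

definition C :: "'a fps fps" where "C = flow \<gamma> fps_X"

lemma Phi_X_nth_nth:
  assumes "l \<le> k"
  shows "Phi fps_X $ l $ h = (\<Sum>R\<le>k. (F - 1) ^ R $ l * C $ R $ h)"
proof -
  have "Phi fps_X $ l $ h = (\<Sum>R\<le>l. (F - 1) ^ R $ l * C $ R $ h)"
    by (simp add: Phi_def C_def fps_compose_nth fps_sum_nth B_power atLeast0AtMost mult.commute)
  also have "\<dots> = (\<Sum>R\<le>k. (F - 1) ^ R $ l * C $ R $ h)"
    using assms by (intro sum.mono_neutral_left) (auto simp: F_minus_1_power_nth_eq_0)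
  finally show ?thesis .
qed

lemma Phi_C_nth: "Phi (C $ R) = fps_in_y (F ^ R) * (fps_taylor_coeff R C oo B)"
proof -
  have "(1 + fps_X) ^ R oo B = fps_in_y (F ^ R)"
    by (simp add: fps_compose_power [OF B_nth_0, symmetric] fps_compose_add_distrib B_nth_0
        one_plus_B fps_in_y_power)
  then show ?thesis
    by (simp add: Phi_def C_def flow_nth_eq_fps_taylor_coeff fps_compose_mult_distrib [OF B_nth_0])
qed

lemma Phi_F_minus_1: "Phi (F - 1) * fps_in_y F = fps_const (F - 1)"
proof -
  have "\<gamma> * fps_deriv (F - 1) = F - 1"
    by (simp add: gamma_mult_deriv_F)
  then have "flow \<gamma> (F - 1) * (1 + fps_X) = fps_const (F - 1)"
    by (rule flow_eigenvector)
  then have "(flow \<gamma> (F - 1) * (1 + fps_X)) oo B = fps_const (F - 1)"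
    by simp
  then show ?thesis
    by (simp add: Phi_def fps_compose_mult_distrib [OF B_nth_0] fps_compose_add_distrib B_nth_0
        one_plus_B)
qed

lemma sum_Phi_X_nth_nth_mult_power:
  assumes "l \<le> k"
  shows "(\<Sum>h\<le>i. Phi fps_X $ l $ h * (Phi fps_X ^ h) $ a $ i)
       = (\<Sum>R\<le>k. (F - 1) ^ R $ l * Phi (C $ R) $ a $ i)"
proof -
  have "(\<Sum>h\<le>i. Phi fps_X $ l $ h * (Phi fps_X ^ h) $ a $ i)
      = (\<Sum>h\<le>i. \<Sum>R\<le>k. (F - 1) ^ R $ l * (C $ R $ h * (Phi fps_X ^ h) $ a $ i))"
    by (simp add: Phi_X_nth_nth [OF assms] sum_distrib_right mult.assoc)
  also have "\<dots> = (\<Sum>R\<le>k. (F - 1) ^ R $ l * (\<Sum>h\<le>i. C $ R $ h * (Phi fps_X ^ h) $ a $ i))"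
    by (subst sum.swap) (simp add: sum_distrib_left)
  also have "\<dots> = (\<Sum>R\<le>k. (F - 1) ^ R $ l * Phi (C $ R) $ a $ i)"
    by (simp add: Phi_nth_nth [of "C $ _"])
  finally show ?thesis .
qed

lemma sum_Phi_C_nth_mult_Phi_power:
  "(\<Sum>a\<le>j. Phi (C $ R) $ a $ i * Phi ((F - 1) ^ R) $ (j - a) $ k)
   = (F - 1) ^ R $ k * (fps_taylor_coeff R C oo B) $ j $ i"
proof -
  define M where "M = fps_taylor_coeff R C oo B"
  have "fps_in_y (F ^ R) * Phi ((F - 1) ^ R) = (Phi (F - 1) * fps_in_y F) ^ R"
    by (simp add: Phi_power fps_in_y_power power_mult_distrib mult.commute)
  then have cancel: "fps_in_y (F ^ R) * Phi ((F - 1) ^ R) = fps_const ((F - 1) ^ R)"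
    by (simp add: Phi_F_minus_1)
  have "(\<Sum>a\<le>j. Phi (C $ R) $ a $ i * Phi ((F - 1) ^ R) $ (j - a) $ k)
      = (fps_coeff_x i (fps_in_y (F ^ R) * M) * fps_coeff_x k (Phi ((F - 1) ^ R))) $ j"
    by (simp only: sum_nth_nth_mult_eq_fps_coeff_x_mult Phi_C_nth M_def)
  also have "\<dots> = (fps_coeff_x i M * fps_coeff_x k (fps_in_y (F ^ R) * Phi ((F - 1) ^ R))) $ j"
    by (simp only: fps_coeff_x_fps_in_y_mult) (simp only: ac_simps)
  also have "\<dots> = (F - 1) ^ R $ k * M $ j $ i"
    by (simp add: cancel fps_coeff_x_fps_const mult.commute)
  finally show ?thesis
    by (simp add: M_def)
qed

lemma fps_taylor_coeff_C_compose_B_nth_nth: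
  "(fps_taylor_coeff R C oo B) $ j $ i
   = (\<Sum>m\<le>j. (F - 1) ^ m $ j * of_nat (m + R choose m) * C $ (m + R) $ i)"
  by (simp add: fps_compose_nth B_power fps_sum_nth fps_taylor_coeff_def atLeast0AtMost mult_ac
      flip: fps_of_nat)

text \<open>The coefficient of \<open>x^i y^j z^k\<close> in \<open>C(x, (F(y) - 1) + (F(z) - 1))\<close>.\<close>

definition flow_at_sum_coeff :: "nat \<Rightarrow> nat \<Rightarrow> nat \<Rightarrow> 'a" where
  "flow_at_sum_coeff i j k =
     (\<Sum>R\<le>k. \<Sum>m\<le>j. (F - 1) ^ R $ k * (F - 1) ^ m $ j * of_nat (m + R choose m) * C $ (m + R) $ i)"

lemma flow_at_sum_coeff_commute: "flow_at_sum_coeff i j k = flow_at_sum_coeff i k j"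
proof -
  have "(F - 1) ^ R $ k * (F - 1) ^ m $ j * of_nat (m + R choose m) * C $ (m + R) $ i
      = (F - 1) ^ m $ j * (F - 1) ^ R $ k * of_nat (R + m choose R) * C $ (R + m) $ i" for m R
    using binomial_symmetric[of m "m + R"] by (simp add: add.commute)
  then show ?thesis
    unfolding flow_at_sum_coeff_def by (subst sum.swap) (intro sum.cong refl)
qed

lemma triple_sum_eq_flow_at_sum_coeff:
  "(\<Sum>a\<le>j. \<Sum>h\<le>i. \<Sum>l\<le>k. (Phi fps_X ^ h) $ a $ i * (Phi fps_X ^ l) $ (j - a) $ k * Phi fps_X $ l $ h)
   = flow_at_sum_coeff i j k"
proof -
  let ?P = "\<lambda>h a i. (Phi fps_X ^ h) $ a $ i"
  have "(\<Sum>a\<le>j. \<Sum>h\<le>i. \<Sum>l\<le>k. ?P h a i * ?P l (j - a) k * Phi fps_X $ l $ h)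
      = (\<Sum>a\<le>j. \<Sum>l\<le>k. ?P l (j - a) k * (\<Sum>h\<le>i. Phi fps_X $ l $ h * ?P h a i))"
    by (rule sum.cong [OF refl]) (subst sum.swap, simp add: sum_distrib_left mult_ac)
  also have "\<dots> = (\<Sum>a\<le>j. \<Sum>l\<le>k. ?P l (j - a) k * (\<Sum>R\<le>k. (F - 1) ^ R $ l * Phi (C $ R) $ a $ i))"
    by (intro sum.cong refl) (simp add: sum_Phi_X_nth_nth_mult_power)
  also have "\<dots> = (\<Sum>a\<le>j. \<Sum>R\<le>k. Phi (C $ R) $ a $ i * (\<Sum>l\<le>k. (F - 1) ^ R $ l * ?P l (j - a) k))"
    by (rule sum.cong [OF refl]) (simp only: sum_distrib_left, subst sum.swap, simp add: mult_ac)
  also have "\<dots> = (\<Sum>a\<le>j. \<Sum>R\<le>k. Phi (C $ R) $ a $ i * Phi ((F - 1) ^ R) $ (j - a) $ k)"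
    by (simp add: Phi_nth_nth [of "(F - 1) ^ _"])
  also have "\<dots> = (\<Sum>R\<le>k. (F - 1) ^ R $ k * (fps_taylor_coeff R C oo B) $ j $ i)"
    by (subst sum.swap) (simp add: sum_Phi_C_nth_mult_Phi_power)
  also have "\<dots> = flow_at_sum_coeff i j k"
    by (simp add: flow_at_sum_coeff_def fps_taylor_coeff_C_compose_B_nth_nth sum_distrib_left mult_ac)
  finally show ?thesis .
qed

end

theorem theorem3p2:
  fixes f :: "'a::{alg_closed_field, field_char_0} fps"
    and G :: "'a fps fps"
    and v0 :: nat
  assumes "v0 \<ge> 1"
    and "f $ 0 = 1"
    and "\<And>n. 0 < n \<Longrightarrow> n < v0 \<Longrightarrow> f $ n = 0"
    and "f $ v0 = 1"
    and "is_G v0 f G"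
  shows "\<forall>i j k.
    (\<Sum>a\<le>j. \<Sum>h\<le>i. \<Sum>l\<le>k. pfrak G h i a * pfrak G l k (j - a) * pfrak G 1 h l)
  = (\<Sum>c\<le>k. \<Sum>h\<le>i. \<Sum>l\<le>j. pfrak G h i c * pfrak G l j (k - c) * pfrak G 1 h l)"
proof -
  interpret normalized_series v0 f
    using assms(1-4) by unfold_locales auto
  have "G = Phi fps_X"
    using assms(5) by (rule is_G_imp_eq_Phi_X)
  then show ?thesis
    by (simp add: pfrak_eq_nth_nth_power triple_sum_eq_flow_at_sum_coeff flow_at_sum_coeff_commute)
qed

end
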